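(* Suppose $R<1$ and let $C\in\mathscr P_+$. Suppose $V^1$ is a subsolution and $V^2$ is a positive supersolution for the pair $(f_{EZ},C)$, that the pair $(V^1,V^2)$ satisfies Condition A for $(f_{EZ},C)$, and that there are $K,\gamma>0$ with $C_t^{1-R}\le Ke^{-\gamma t}(1-R)V^2_t$ for all $t\ge0$. Then $V^1_\sigma\le V^2_\sigma$ for all finite stopping times $\sigma\ge0$.
   Context: Work on a filtered probability space $(\Omega,\mathcal F,(\mathcal F_t)_{t\ge0},\mathbb P)$ with complete continuous filtration and trivial $\mathcal F_0$. $\mathscr P$ denotes progressively measurable processes and $\mathscr P_+$ nonnegative ones. Parameters $R,S\in(0,1)\cup(1,\infty)$ satisfy $\theta:=\frac{1-R}{1-S}>1$; $\rho:=\frac{\theta-1}{\theta}$. The Epstein--Zin aggregator is $f_{EZ}(c,v)=\frac{c^{1-S}}{1-S}((1-R)v)^{\rho}$ for $c\ge0$ and $v\in\mathbb V:=(1-R)[0,\infty)$. $\mathbb I(f_{EZ},C)=\{V\in\mathscr P:\mathbb E\int_0^\infty|f_{EZ}(C_s,V_s)|ds<\infty\}$ and $\mathbb{UI}(f_{EZ},C)$ is the set of its uniformly integrable elements. A $\mathbb V$-valued optional process $V$ with right limits $V_{t+}$ is a subsolution for $(f_{EZ},C)$ if $\limsup_{t\to\infty}\mathbb E[V_{t+}]\le0$ and $V_\sigma\le\mathbb E[V_{\tau+}+\int_\sigma^\tau f_{EZ}(C_s,V_s)ds\mid\mathcal F_\sigma]$ for all bounded stopping times $\sigma\le\tau$;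 it is a supersolution if $\liminf_{t\to\infty}\mathbb E[V_{t+}]\ge0$ and $V_\sigma\ge\mathbb E[V_{\tau+}+\int_\sigma^\tau f_{EZ}(C_s,V_s)ds\mid\mathcal F_\sigma]$ for all bounded stopping times $\sigma\le\tau$. The pair $(V^1,V^2)$ satisfies Condition A for $(f_{EZ},C)$ if either $V^1$ or $V^2$ belongs to $\mathbb{UI}(f_{EZ},C)$ and $(V^1-V^2)^+$ is bounded in $L^1$. *)

theory Defs
  imports "HOL-Probability.Probability"
begin

text \<open>A filtration on the probability space M, indexed by real times t \<ge> 0
  (values of F at negative times are irrelevant and unconstrained).\<close>
definition filtration_on :: "'a measure \<Rightarrow> (real \<Rightarrow> 'a measure) \<Rightarrow> bool" where
  "filtration_on M F \<longleftrightarrow>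
     (\<forall>t\<ge>0. space (F t) = space M \<and> sets (F t) \<subseteq> sets M) \<and>
     (\<forall>s t. 0 \<le> s \<longrightarrow> s \<le> t \<longrightarrow> sets (F s) \<subseteq> sets (F t))"

definition std_filtered_space :: "'a measure \<Rightarrow> (real \<Rightarrow> 'a measure) \<Rightarrow> bool" where
  "std_filtered_space M F \<longleftrightarrow>
     prob_space M \<and> filtration_on M F \<and>
     \<comment> \<open>completeness: F_0 contains all subsets of M-null sets\<close>
     (\<forall>N A. N \<in> null_sets M \<longrightarrow> A \<subseteq> N \<longrightarrow> A \<in> sets (F 0)) \<and>
     \<comment> \<open>right-continuity\<close>
     (\<forall>t\<ge>0. sets (F t) = {A. \<forall>s>t. A \<in> sets (F s)}) \<and>
     \<comment> \<open>left-continuity\<close>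
     (\<forall>t>0. sets (F t) = sigma_sets (space M) (\<Union>s\<in>{0..<t}. sets (F s))) \<and>
     \<comment> \<open>trivial F_0\<close>
     (\<forall>A\<in>sets (F 0). emeasure M A = 0 \<or> emeasure M A = 1)"

text \<open>(Finite, i.e. real-valued, nonnegative) stopping times.\<close>
definition stopping_time_on :: "'a measure \<Rightarrow> (real \<Rightarrow> 'a measure) \<Rightarrow> ('a \<Rightarrow> real) \<Rightarrow> bool" where
  "stopping_time_on M F T \<longleftrightarrow>
     (\<forall>\<omega>\<in>space M. 0 \<le> T \<omega>) \<and> (\<forall>t\<ge>0. {\<omega>\<in>space M. T \<omega> \<le> t} \<in> sets (F t))"

definition bounded_stopping_time :: "'a measure \<Rightarrow> (real \<Rightarrow> 'a measure) \<Rightarrow> ('a \<Rightarrow> real) \<Rightarrow> bool" where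
  "bounded_stopping_time M F T \<longleftrightarrow> stopping_time_on M F T \<and> (\<exists>B. \<forall>\<omega>\<in>space M. T \<omega> \<le> B)"

definition sigma_at :: "'a measure \<Rightarrow> (real \<Rightarrow> 'a measure) \<Rightarrow> ('a \<Rightarrow> real) \<Rightarrow> 'a measure" where
  "sigma_at M F T = sigma (space M)
     {A. A \<subseteq> space M \<and> (\<forall>t\<ge>0. {\<omega>\<in>A. T \<omega> \<le> t} \<in> sets (F t))}"

definition progressive :: "'a measure \<Rightarrow> (real \<Rightarrow> 'a measure) \<Rightarrow> (real \<Rightarrow> 'a \<Rightarrow> real) \<Rightarrow> bool" where
  "progressive M F X \<longleftrightarrow>
     (\<forall>t\<ge>0. (\<lambda>(s, \<omega>). X s \<omega>) \<in> (restrict_space borel {0..t} \<Otimes>\<^sub>M F t) \<rightarrow>\<^sub>M borel)"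

definition progressive_nonneg :: "'a measure \<Rightarrow> (real \<Rightarrow> 'a measure) \<Rightarrow> (real \<Rightarrow> 'a \<Rightarrow> real) \<Rightarrow> bool" where
  "progressive_nonneg M F X \<longleftrightarrow> progressive M F X \<and> (\<forall>t\<ge>0. \<forall>\<omega>\<in>space M. 0 \<le> X t \<omega>)"

definition optional_sigma :: "'a measure \<Rightarrow> (real \<Rightarrow> 'a measure) \<Rightarrow> (real \<times> 'a) measure" where
  "optional_sigma M F = sigma ({0..} \<times> space M)
     {{(t, \<omega>). 0 \<le> t \<and> \<omega> \<in> space M \<and> T \<omega> \<le> t} | T. stopping_time_on M F T}"

definition optional :: "'a measure \<Rightarrow> (real \<Rightarrow> 'a measure) \<Rightarrow> (real \<Rightarrow> 'a \<Rightarrow> real) \<Rightarrow> bool" where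
  "optional M F X \<longleftrightarrow> (\<lambda>(t, \<omega>). X t \<omega>) \<in> optional_sigma M F \<rightarrow>\<^sub>M borel"

definition has_right_limits :: "'a measure \<Rightarrow> (real \<Rightarrow> 'a \<Rightarrow> real) \<Rightarrow> bool" where
  "has_right_limits M X \<longleftrightarrow> (\<forall>\<omega>\<in>space M. \<forall>t\<ge>0. \<exists>L. ((\<lambda>s. X s \<omega>) \<longlongrightarrow> L) (at_right t))"

definition rlim :: "(real \<Rightarrow> 'a \<Rightarrow> real) \<Rightarrow> real \<Rightarrow> 'a \<Rightarrow> real" where
  "rlim X t \<omega> = Lim (at_right t) (\<lambda>s. X s \<omega>)"

definition gen_exp :: "'a measure \<Rightarrow> ('a \<Rightarrow> ereal) \<Rightarrow> ereal" where
  "gen_exp M X = enn2ereal (\<integral>\<^sup>+\<omega>. e2ennreal (X \<omega>) \<partial>M) - enn2ereal (\<integral>\<^sup>+\<omega>. e2ennreal (- X \<omega>) \<partial>M)"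

definition gen_cond_exp :: "'a measure \<Rightarrow> 'a measure \<Rightarrow> ('a \<Rightarrow> ereal) \<Rightarrow> 'a \<Rightarrow> ereal" where
  "gen_cond_exp M N X \<omega> =
     enn2ereal (nn_cond_exp M N (\<lambda>x. e2ennreal (X x)) \<omega>)
     - enn2ereal (nn_cond_exp M N (\<lambda>x. e2ennreal (- X x)) \<omega>)"

definition path_int :: "(real \<Rightarrow> real) \<Rightarrow> real \<Rightarrow> real \<Rightarrow> ereal" where
  "path_int g a b = enn2ereal (\<integral>\<^sup>+s\<in>{a..b}. ennreal (g s) \<partial>lborel)
                    - enn2ereal (\<integral>\<^sup>+s\<in>{a..b}. ennreal (- g s) \<partial>lborel)"

definition theta :: "real \<Rightarrow> real \<Rightarrow> real" where
  "theta R S = (1 - R) / (1 - S)"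

definition rho :: "real \<Rightarrow> real \<Rightarrow> real" where
  "rho R S = (theta R S - 1) / theta R S"

definition f_EZ :: "real \<Rightarrow> real \<Rightarrow> real \<Rightarrow> real \<Rightarrow> real" where
  "f_EZ R S c v = c powr (1 - S) / (1 - S) * ((1 - R) * v) powr (rho R S)"

definition EZ_params :: "real \<Rightarrow> real \<Rightarrow> bool" where
  "EZ_params R S \<longleftrightarrow> 0 < R \<and> R \<noteq> 1 \<and> 0 < S \<and> S \<noteq> 1 \<and> theta R S > 1"

definition VV :: "real \<Rightarrow> real set" where
  "VV R = {(1 - R) * x | x. 0 \<le> x}"

definition II :: "'a measure \<Rightarrow> (real \<Rightarrow> 'a measure) \<Rightarrow> real \<Rightarrow> real \<Rightarrow> (real \<Rightarrow> 'a \<Rightarrow> real)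
                  \<Rightarrow> (real \<Rightarrow> 'a \<Rightarrow> real) set" where
  "II M F R S C = {V. progressive M F V \<and>
     (\<integral>\<^sup>+\<omega>. (\<integral>\<^sup>+s\<in>{0..}. ennreal \<bar>f_EZ R S (C s \<omega>) (V s \<omega>)\<bar> \<partial>lborel) \<partial>M) < \<infinity>}"

definition unif_integrable :: "'a measure \<Rightarrow> (real \<Rightarrow> 'a \<Rightarrow> real) \<Rightarrow> bool" where
  "unif_integrable M X \<longleftrightarrow>
     (\<forall>t\<ge>0. integrable M (X t)) \<and>
     (\<forall>e>0. \<exists>K. \<forall>t\<ge>0.
        (\<integral>\<^sup>+\<omega>. ennreal \<bar>X t \<omega>\<bar> * indicator {\<omega>. K < \<bar>X t \<omega>\<bar>} \<omega> \<partial>M) < ennreal e)"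

definition UII :: "'a measure \<Rightarrow> (real \<Rightarrow> 'a measure) \<Rightarrow> real \<Rightarrow> real \<Rightarrow> (real \<Rightarrow> 'a \<Rightarrow> real)
                  \<Rightarrow> (real \<Rightarrow> 'a \<Rightarrow> real) set" where
  "UII M F R S C = {V \<in> II M F R S C. unif_integrable M V}"

definition is_VV_optional_rl :: "'a measure \<Rightarrow> (real \<Rightarrow> 'a measure) \<Rightarrow> real \<Rightarrow> (real \<Rightarrow> 'a \<Rightarrow> real) \<Rightarrow> bool" where
  "is_VV_optional_rl M F R V \<longleftrightarrow>
     optional M F V \<and> has_right_limits M V \<and> (\<forall>t\<ge>0. \<forall>\<omega>\<in>space M. V t \<omega> \<in> VV R)"

definition EZ_target :: "real \<Rightarrow> real \<Rightarrow> (real \<Rightarrow> 'a \<Rightarrow> real) \<Rightarrow> (real \<Rightarrow> 'a \<Rightarrow> real)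
                         \<Rightarrow> ('a \<Rightarrow> real) \<Rightarrow> ('a \<Rightarrow> real) \<Rightarrow> 'a \<Rightarrow> ereal" where
  "EZ_target R S C V \<sigma> \<tau> \<omega> =
     ereal (rlim V (\<tau> \<omega>) \<omega>) + path_int (\<lambda>s. f_EZ R S (C s \<omega>) (V s \<omega>)) (\<sigma> \<omega>) (\<tau> \<omega>)"

definition subsolution :: "'a measure \<Rightarrow> (real \<Rightarrow> 'a measure) \<Rightarrow> real \<Rightarrow> real
                           \<Rightarrow> (real \<Rightarrow> 'a \<Rightarrow> real) \<Rightarrow> (real \<Rightarrow> 'a \<Rightarrow> real) \<Rightarrow> bool" where
  "subsolution M F R S C V \<longleftrightarrow>
     is_VV_optional_rl M F R V \<and>
     Limsup at_top (\<lambda>t. gen_exp M (\<lambda>\<omega>. ereal (rlim V t \<omega>))) \<le> 0 \<and>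
     (\<forall>\<sigma> \<tau>. bounded_stopping_time M F \<sigma> \<longrightarrow> bounded_stopping_time M F \<tau> \<longrightarrow>
        (\<forall>\<omega>\<in>space M. \<sigma> \<omega> \<le> \<tau> \<omega>) \<longrightarrow>
        (AE \<omega> in M. ereal (V (\<sigma> \<omega>) \<omega>)
            \<le> gen_cond_exp M (sigma_at M F \<sigma>) (EZ_target R S C V \<sigma> \<tau>) \<omega>))"

definition supersolution :: "'a measure \<Rightarrow> (real \<Rightarrow> 'a measure) \<Rightarrow> real \<Rightarrow> real
                           \<Rightarrow> (real \<Rightarrow> 'a \<Rightarrow> real) \<Rightarrow> (real \<Rightarrow> 'a \<Rightarrow> real) \<Rightarrow> bool" where
  "supersolution M F R S C V \<longleftrightarrow>
     is_VV_optional_rl M F R V \<and>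
     Liminf at_top (\<lambda>t. gen_exp M (\<lambda>\<omega>. ereal (rlim V t \<omega>))) \<ge> 0 \<and>
     (\<forall>\<sigma> \<tau>. bounded_stopping_time M F \<sigma> \<longrightarrow> bounded_stopping_time M F \<tau> \<longrightarrow>
        (\<forall>\<omega>\<in>space M. \<sigma> \<omega> \<le> \<tau> \<omega>) \<longrightarrow>
        (AE \<omega> in M. ereal (V (\<sigma> \<omega>) \<omega>)
            \<ge> gen_cond_exp M (sigma_at M F \<sigma>) (EZ_target R S C V \<sigma> \<tau>) \<omega>))"

definition conditionA :: "'a measure \<Rightarrow> (real \<Rightarrow> 'a measure) \<Rightarrow> real \<Rightarrow> real \<Rightarrow> (real \<Rightarrow> 'a \<Rightarrow> real)
                          \<Rightarrow> (real \<Rightarrow> 'a \<Rightarrow> real) \<Rightarrow> (real \<Rightarrow> 'a \<Rightarrow> real) \<Rightarrow> bool" where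
  "conditionA M F R S C V1 V2 \<longleftrightarrow>
     (V1 \<in> UII M F R S C \<or> V2 \<in> UII M F R S C) \<and>
     (\<exists>B. \<forall>t\<ge>0. (\<integral>\<^sup>+\<omega>. ennreal (max 0 (V1 t \<omega> - V2 t \<omega>)) \<partial>M) \<le> ennreal B)"

end

theory Submission
  imports Defs
begin

text \<open>Let \<open>u t = E[(V1 t - V2 t)\<^sup>+]\<close>. Since \<open>f_EZ c\<close> is concave, the growth bound on \<open>C\<close>
  bounds its slope at \<open>V2 s\<close> by \<open>\<ell> s = (\<theta> - 1) K\<^bsup>1/\<theta>\<^esup> exp (- \<gamma> s / \<theta>)\<close>, and comparing the
  sub- and supersolution inequalities on \<open>[t, T]\<close> gives
  \<open>u t \<le> E[V1 (T+)] + \<integral>\<^sub>t\<^sup>\<infinity> \<ell> s u s ds\<close>. Because \<open>R < 1\<close>, \<open>V1 \<ge> 0\<close>, so \<open>lim sup E[V1 (T+)] \<le> 0\<close>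
  means \<open>E[V1 (T+)] \<rightarrow> 0\<close>. As \<open>u\<close> is bounded and \<open>\<ell>\<close> decays exponentially, iterating \<open>u t \<le> \<integral>\<^sub>t\<^sup>\<infinity> \<ell> s u s ds\<close> gives
  \<open>u t \<le> B (c/\<delta>)\<^sup>n / n!\<close> for every \<open>n\<close>, hence \<open>u = 0\<close>. The same estimate at a bounded stopping time
  \<open>\<sigma>\<close> yields \<open>V1 \<sigma> \<le> V2 \<sigma>\<close> a.s.; general \<open>\<sigma>\<close> are reached through \<open>min \<sigma> n\<close>.\<close>

lemma measurable_optional_comp:
  assumes "optional M F V"
    and h: "h \<in> space N \<rightarrow> {0..} \<times> space M"
    and hT: "\<And>T. stopping_time_on M F T \<Longrightarrow> {x\<in>space N. T (snd (h x)) \<le> fst (h x)} \<in> sets N"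
  shows "(\<lambda>x. V (fst (h x)) (snd (h x))) \<in> borel_measurable N"
proof -
  have "h \<in> N \<rightarrow>\<^sub>M optional_sigma M F"
    unfolding optional_sigma_def
  proof (rule measurable_measure_of)
    fix y assume "y \<in> {{(t, \<omega>). 0 \<le> t \<and> \<omega> \<in> space M \<and> T \<omega> \<le> t} | T. stopping_time_on M F T}"
    then obtain T where T: "stopping_time_on M F T"
      and y: "y = {(t, \<omega>). 0 \<le> t \<and> \<omega> \<in> space M \<and> T \<omega> \<le> t}"
      by auto
    have "h -` y \<inter> space N = {x\<in>space N. T (snd (h x)) \<le> fst (h x)}"
      using h unfolding y by (auto simp: Pi_iff split: prod.splits)
    then show "h -` y \<inter> space N \<in> sets N" using hT[OF T] by simp
  qed (use h in auto)
  from measurable_comp[OF this \<open>optional M F V\<close>[unfolded optional_def]]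
  show ?thesis by (simp add: comp_def case_prod_beta)
qed

lemma stopping_time_on_measurable:
  assumes "filtration_on M F" "stopping_time_on M F T"
  shows "T \<in> borel_measurable M"
proof (rule borel_measurableI_le)
  fix t
  show "{\<omega> \<in> space M. T \<omega> \<le> t} \<in> sets M"
  proof (cases "0 \<le> t")
    case True
    then show ?thesis using assms unfolding filtration_on_def stopping_time_on_def by blast
  next
    case False
    then have "{\<omega> \<in> space M. T \<omega> \<le> t} = {}" using assms(2) unfolding stopping_time_on_def by force
    then show ?thesis by (metis sets.empty_sets)
  qed
qed

lemma optional_at_measurable:
  assumes "filtration_on M F" "optional M F V" "\<sigma> \<in> borel_measurable M"
    and "\<And>\<omega>. \<omega> \<in> space M \<Longrightarrow> 0 \<le> \<sigma> \<omega>"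
  shows "(\<lambda>\<omega>. V (\<sigma> \<omega>) \<omega>) \<in> borel_measurable M"
proof -
  have "(\<lambda>\<omega>. V (fst (\<sigma> \<omega>, \<omega>)) (snd (\<sigma> \<omega>, \<omega>))) \<in> borel_measurable M"
  proof (rule measurable_optional_comp[OF assms(2)])
    fix T assume "stopping_time_on M F T"
    then have [measurable]: "T \<in> borel_measurable M"
      by (rule stopping_time_on_measurable[OF assms(1)])
    have [measurable]: "\<sigma> \<in> borel_measurable M" by fact
    show "{\<omega> \<in> space M. T (snd (\<sigma> \<omega>, \<omega>)) \<le> fst (\<sigma> \<omega>, \<omega>)} \<in> sets M" by simp
  qed (use assms(4) in auto)
  then show ?thesis by simp
qed

text \<open>Processes are only measurable on times \<open>t \<ge> 0\<close>, so time integrals up to \<open>T\<close> are taken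
  on the product with Lebesgue measure restricted to \<open>[0, T]\<close>.\<close>

definition lborel_upto :: "real \<Rightarrow> real measure" where
  "lborel_upto T = restrict_space lborel {0..T}"

lemma space_lborel_upto [simp]: "space (lborel_upto T) = {0..T}"
  by (simp add: lborel_upto_def)

lemma sigma_finite_lborel_upto: "sigma_finite_measure (lborel_upto T)"
  unfolding lborel_upto_def
  by (rule sigma_finite_measure_restrict_space) (auto simp: lborel.sigma_finite_measure_axioms)

lemma measurable_snd_lborel_upto [measurable]: "snd \<in> borel_measurable (M \<Otimes>\<^sub>M lborel_upto T)"
  by (rule measurable_compose[OF measurable_snd]) (simp add: lborel_upto_def measurable_restrict_space1)

lemma indicator_measurable_lborel_upto [measurable]:
  "(\<lambda>s. indicator {a..b} s :: ennreal) \<in> borel_measurable (lborel_upto T)"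
  unfolding lborel_upto_def by (intro measurable_restrict_space1) simp

lemma nn_integral_lborel_upto:
  assumes "0 \<le> a"
  shows "(\<integral>\<^sup>+ s\<in>{a..T}. h s \<partial>lborel) = (\<integral>\<^sup>+ s. h s * indicator {a..T} s \<partial>lborel_upto T)"
proof -
  have "(\<integral>\<^sup>+ s. h s * indicator {a..T} s \<partial>lborel_upto T)
      = (\<integral>\<^sup>+ s. h s * indicator {a..T} s * indicator {0..T} s \<partial>lborel)"
    unfolding lborel_upto_def by (rule nn_integral_restrict_space) simp
  also have "\<dots> = (\<integral>\<^sup>+ s\<in>{a..T}. h s \<partial>lborel)"
    using assms by (intro nn_integral_cong) (auto split: split_indicator)
  finally show ?thesis by simp
qed

lemma borel_measurable_nn_integral_lborel_upto:
  assumes h: "(\<lambda>x. h (fst x) (snd x)) \<in> borel_measurable (M \<Otimes>\<^sub>M lborel_upto T)"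
    and [measurable]: "\<sigma> \<in> borel_measurable M"
  shows "(\<lambda>\<omega>. \<integral>\<^sup>+ s. h \<omega> s * indicator {\<sigma> \<omega>..T} s \<partial>lborel_upto T) \<in> borel_measurable M"
proof -
  interpret sigma_finite_measure "lborel_upto T" by (rule sigma_finite_lborel_upto)
  have "(\<lambda>x. indicator {\<sigma> (fst x)..T} (snd x) :: ennreal) \<in> borel_measurable (M \<Otimes>\<^sub>M lborel_upto T)"
  proof -
    have "(\<lambda>x. if \<sigma> (fst x) \<le> snd x \<and> snd x \<le> T then 1 else 0 :: ennreal)
        \<in> borel_measurable (M \<Otimes>\<^sub>M lborel_upto T)"
      by measurable
    then show ?thesis by (simp add: indicator_def)
  qed
  with h have "(\<lambda>x. h (fst x) (snd x) * indicator {\<sigma> (fst x)..T} (snd x))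
      \<in> borel_measurable (M \<Otimes>\<^sub>M lborel_upto T)"
    by (rule borel_measurable_times_ennreal)
  then show ?thesis by (intro borel_measurable_nn_integral) (simp add: case_prod_beta)
qed

lemma optional_measurable_pair:
  assumes "filtration_on M F" "optional M F V"
  shows "(\<lambda>x. V (snd x) (fst x)) \<in> borel_measurable (M \<Otimes>\<^sub>M lborel_upto T)"
proof -
  have "(\<lambda>x. V (fst (prod.swap x)) (snd (prod.swap x))) \<in> borel_measurable (M \<Otimes>\<^sub>M lborel_upto T)"
  proof (rule measurable_optional_comp[OF assms(2)])
    show "prod.swap \<in> space (M \<Otimes>\<^sub>M lborel_upto T) \<rightarrow> {0..} \<times> space M"
      by (auto simp: space_pair_measure)
    fix T' assume "stopping_time_on M F T'"
    then have [measurable]: "T' \<in> borel_measurable M"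
      by (rule stopping_time_on_measurable[OF assms(1)])
    show "{x \<in> space (M \<Otimes>\<^sub>M lborel_upto T). T' (snd (prod.swap x)) \<le> fst (prod.swap x)}
        \<in> sets (M \<Otimes>\<^sub>M lborel_upto T)"
      by simp
  qed
  then show ?thesis by simp
qed

lemma progressive_measurable_pair:
  assumes "filtration_on M F" "progressive M F C" "0 \<le> T"
  shows "(\<lambda>x. C (snd x) (fst x)) \<in> borel_measurable (M \<Otimes>\<^sub>M lborel_upto T)"
proof -
  have sp: "space (F T) = space M" and ss: "sets (F T) \<subseteq> sets M"
    using assms unfolding filtration_on_def by auto
  have C: "(\<lambda>(s, \<omega>). C s \<omega>) \<in> (restrict_space borel {0..T} \<Otimes>\<^sub>M F T) \<rightarrow>\<^sub>M borel"
    using assms(2,3) unfolding progressive_def by auto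
  have "prod.swap \<in> (M \<Otimes>\<^sub>M lborel_upto T) \<rightarrow>\<^sub>M (restrict_space borel {0..T} \<Otimes>\<^sub>M F T)"
  proof (rule measurable_pair_measureI)
    show "prod.swap \<in> space (M \<Otimes>\<^sub>M lborel_upto T) \<rightarrow> space (restrict_space borel {0..T}) \<times> space (F T)"
      using sp by (auto simp: space_pair_measure)
    fix A B assume "A \<in> sets (restrict_space borel {0..T})" and B: "B \<in> sets (F T)"
    then have A: "A \<in> sets (lborel_upto T)" by (simp add: lborel_upto_def sets_restrict_space)
    have "prod.swap -` (A \<times> B) \<inter> space (M \<Otimes>\<^sub>M lborel_upto T) = B \<times> A"
      using sets.sets_into_space[OF A] sets.sets_into_space[of B M] B ss
      by (auto simp: space_pair_measure)
    then show "prod.swap -` (A \<times> B) \<inter> space (M \<Otimes>\<^sub>M lborel_upto T) \<in> sets (M \<Otimes>\<^sub>M lborel_upto T)"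
      using A B ss by auto
  qed
  from measurable_comp[OF this C] show ?thesis by (simp add: comp_def case_prod_beta)
qed

lemma bounded_stopping_time_const:
  assumes "filtration_on M F" "0 \<le> t"
  shows "bounded_stopping_time M F (\<lambda>_. t)"
  unfolding bounded_stopping_time_def stopping_time_on_def
proof safe
  fix s :: real assume "0 \<le> s"
  then have "space (F s) = space M" using assms(1) unfolding filtration_on_def by simp
  then show "{\<omega> \<in> space M. t \<le> s} \<in> sets (F s)"
    using sets.top[of "F s"] by (cases "t \<le> s") simp_all
qed (use assms in auto)

lemma stopping_time_on_min_const:
  assumes "filtration_on M F" "stopping_time_on M F \<sigma>" "0 \<le> n"
  shows "stopping_time_on M F (\<lambda>\<omega>. min (\<sigma> \<omega>) n)"
  unfolding stopping_time_on_def
proof safe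
  fix \<omega> assume "\<omega> \<in> space M"
  then show "0 \<le> min (\<sigma> \<omega>) n" using assms(2,3) unfolding stopping_time_on_def by simp
next
  fix t :: real assume t: "0 \<le> t"
  show "{\<omega> \<in> space M. min (\<sigma> \<omega>) n \<le> t} \<in> sets (F t)"
  proof (cases "n \<le> t")
    case True
    moreover have "space (F t) = space M" using assms(1) t unfolding filtration_on_def by simp
    ultimately have "{\<omega> \<in> space M. min (\<sigma> \<omega>) n \<le> t} = space (F t)" by auto
    then show ?thesis by simp
  next
    case False
    then have "{\<omega> \<in> space M. min (\<sigma> \<omega>) n \<le> t} = {\<omega> \<in> space M. \<sigma> \<omega> \<le> t}" by auto
    then show ?thesis using assms(2) t unfolding stopping_time_on_def by simp
  qed
qed

lemma subalgebra_sigma_at: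
  assumes "filtration_on M F" "stopping_time_on M F \<sigma>"
  shows "subalgebra M (sigma_at M F \<sigma>)"
proof -
  let ?G = "{A. A \<subseteq> space M \<and> (\<forall>t\<ge>0. {\<omega>\<in>A. \<sigma> \<omega> \<le> t} \<in> sets (F t))}"
  have G: "?G \<subseteq> sets M"
  proof
    fix A assume A: "A \<in> ?G"
    have "{\<omega>\<in>A. \<sigma> \<omega> \<le> real n} \<in> sets (F (real n))" for n
      using A by simp
    moreover have "sets (F (real n)) \<subseteq> sets M" for n
      using assms(1) unfolding filtration_on_def by simp
    ultimately have "{\<omega>\<in>A. \<sigma> \<omega> \<le> real n} \<in> sets M" for n
      by blast
    then have "(\<Union>n. {\<omega>\<in>A. \<sigma> \<omega> \<le> real n}) \<in> sets M" by blast
    moreover have "A = (\<Union>n. {\<omega>\<in>A. \<sigma> \<omega> \<le> real n})"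
      by (auto intro: real_nat_ceiling_ge)
    ultimately show "A \<in> sets M" by simp
  qed
  have "space (sigma_at M F \<sigma>) = space M"
    unfolding sigma_at_def by (rule space_measure_of) auto
  moreover have "sets (sigma_at M F \<sigma>) = sigma_sets (space M) ?G"
    unfolding sigma_at_def by (rule sets_measure_of) auto
  ultimately show ?thesis
    unfolding subalgebra_def using sets.sigma_sets_subset[OF G] by simp
qed

lemma finite_measure_subalgebra_sigma_at:
  assumes "prob_space M" "filtration_on M F" "stopping_time_on M F \<sigma>"
  shows "finite_measure_subalgebra M (sigma_at M F \<sigma>)"
  using subalgebra_sigma_at[OF assms(2,3)] prob_space.finite_measure[OF assms(1)]
  by (simp add: finite_measure_subalgebra_def finite_measure_subalgebra_axioms_def)

lemma rlim_tendsto: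
  assumes "has_right_limits M V" "0 \<le> t" "\<omega> \<in> space M"
  shows "((\<lambda>s. V s \<omega>) \<longlongrightarrow> rlim V t \<omega>) (at_right t)"
proof -
  obtain L where L: "((\<lambda>s. V s \<omega>) \<longlongrightarrow> L) (at_right t)"
    using assms unfolding has_right_limits_def by blast
  then have "Lim (at_right t) (\<lambda>s. V s \<omega>) = L"
    by (intro tendsto_Lim) (simp_all add: trivial_limit_at_right_real)
  then show ?thesis using L by (simp add: rlim_def)
qed

lemma rlim_nonneg:
  assumes "has_right_limits M V" "0 \<le> t" "\<omega> \<in> space M" "\<And>s. 0 \<le> s \<Longrightarrow> 0 \<le> V s \<omega>"
  shows "0 \<le> rlim V t \<omega>"
proof (rule tendsto_lowerbound[OF rlim_tendsto[OF assms(1-3)]])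
  show "\<forall>\<^sub>F s in at_right t. 0 \<le> V s \<omega>"
    using eventually_at_right_less[of t] by (rule eventually_mono) (use assms(2,4) in auto)
qed (simp add: trivial_limit_at_right_real)

lemma borel_measurable_rlim:
  assumes "filtration_on M F" "optional M F V" "has_right_limits M V" "0 \<le> t"
  shows "rlim V t \<in> borel_measurable M"
proof (rule borel_measurable_LIMSEQ_real)
  fix i :: nat
  show "V (t + inverse (Suc i)) \<in> borel_measurable M"
    using optional_at_measurable[OF assms(1,2), of "\<lambda>_. t + inverse (Suc i)"] assms(4) by simp
next
  fix \<omega> assume \<omega>: "\<omega> \<in> space M"
  have "(\<lambda>i. t + inverse (real (Suc i))) \<longlonglongrightarrow> t"
    using tendsto_add[OF tendsto_const LIMSEQ_inverse_real_of_nat, of t] by simp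
  then have "filterlim (\<lambda>i. t + inverse (real (Suc i))) (at_right t) sequentially"
    by (rule tendsto_imp_filterlim_at_right) (intro always_eventually, simp)
  then show "(\<lambda>i. V (t + inverse (Suc i)) \<omega>) \<longlonglongrightarrow> rlim V t \<omega>"
    by (rule filterlim_compose[OF rlim_tendsto[OF assms(3,4) \<omega>]])
qed

lemma gen_exp_nonneg:
  assumes "\<And>\<omega>. \<omega> \<in> space M \<Longrightarrow> 0 \<le> X \<omega>"
  shows "gen_exp M (\<lambda>\<omega>. ereal (X \<omega>)) = enn2ereal (\<integral>\<^sup>+\<omega>. ennreal (X \<omega>) \<partial>M)"
proof -
  have "(\<integral>\<^sup>+\<omega>. e2ennreal (- ereal (X \<omega>)) \<partial>M) = (\<integral>\<^sup>+\<omega>. 0 \<partial>M)"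
    using assms by (intro nn_integral_cong) (simp add: ennreal_neg)
  then show ?thesis by (simp add: gen_exp_def zero_ennreal.rep_eq)
qed

lemma gen_cond_exp_enn2ereal:
  assumes "sigma_finite_subalgebra M N" "P \<in> borel_measurable M"
    and X: "\<And>\<omega>. \<omega> \<in> space M \<Longrightarrow> X \<omega> = enn2ereal (P \<omega>)"
  shows "AE \<omega> in M. gen_cond_exp M N X \<omega> = enn2ereal (nn_cond_exp M N P \<omega>)"
proof -
  interpret sigma_finite_subalgebra M N by fact
  have "(\<lambda>\<omega>. e2ennreal (X \<omega>)) \<in> borel_measurable M"
    using assms(2) by (rule measurable_cong[THEN iffD1, rotated]) (simp add: X)
  then have pos: "AE \<omega> in M. nn_cond_exp M N (\<lambda>\<omega>. e2ennreal (X \<omega>)) \<omega> = nn_cond_exp M N P \<omega>"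
    using X assms(2) by (intro nn_cond_exp_cong AE_I2) simp_all
  have "(\<lambda>\<omega>. e2ennreal (- X \<omega>)) \<in> borel_measurable M"
    by (rule measurable_cong[THEN iffD1, rotated, of "\<lambda>_. 0"]) (simp_all add: X e2ennreal_neg)
  then have "AE \<omega> in M. nn_cond_exp M N (\<lambda>\<omega>. e2ennreal (- X \<omega>)) \<omega> = nn_cond_exp M N (\<lambda>_. 0) \<omega>"
    using X by (intro nn_cond_exp_cong AE_I2) (simp_all add: e2ennreal_neg)
  moreover have "AE \<omega> in M. 0 = nn_cond_exp M N (\<lambda>_. 0) \<omega>"
    by (rule nn_cond_exp_F_meas) simp
  ultimately show ?thesis
    using pos unfolding gen_cond_exp_def by eventually_elim (simp add: zero_ennreal.rep_eq)
qed

lemma path_int_nonneg: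
  assumes "0 \<le> a" "\<And>s. 0 \<le> g s"
  shows "path_int g a b = enn2ereal (\<integral>\<^sup>+ s. ennreal (g s) * indicator {a..b} s \<partial>lborel_upto b)"
proof -
  have "(\<integral>\<^sup>+ s\<in>{a..b}. ennreal (- g s) \<partial>lborel) = 0"
    using assms(2) by (simp add: ennreal_neg)
  then show ?thesis
    unfolding path_int_def nn_integral_lborel_upto[OF assms(1)] by (simp add: zero_ennreal.rep_eq)
qed

lemma ennreal_max_0_diff_le:
  fixes v1 v2 :: real and p1 p2 q :: ennreal
  assumes "ereal v1 \<le> enn2ereal p1" "enn2ereal p2 \<le> ereal v2" "p1 \<le> p2 + q"
  shows "ennreal (max 0 (v1 - v2)) \<le> q"
proof -
  have "ennreal v1 \<le> p1" "p2 \<le> ennreal v2"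
    using assms(1,2) by (metis e2ennreal_enn2ereal e2ennreal_mono e2ennreal_ereal)+
  with assms(3) have "ennreal v1 \<le> ennreal v2 + q"
    by (meson add_right_mono order_trans)
  moreover have "0 \<le> v2" using assms(2) enn2ereal_nonneg[of p2] by (meson ereal_less_eq(5) order_trans)
  ultimately show ?thesis
    by (smt (verit, best) ennreal_0 ennreal_minus ennreal_minus_le_iff zero_le)
qed

section \<open>A backward Gronwall inequality\<close>

lemma powr_le_tangent:
  fixes x y r :: real
  assumes "0 < r" "r < 1" "0 \<le> x" "0 < y"
  shows "x powr r \<le> y powr r + r * y powr (r - 1) * (x - y)"
proof -
  have y: "y * y powr (r - 1) = y powr r"
    using assms(4) by (simp add: powr_mult_base)
  show ?thesis
  proof (cases "x = 0")
    case True
    have "0 \<le> (1 - r) * y powr r" using assms by simp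
    then show ?thesis using True y by (simp add: algebra_simps)
  next
    case False
    then have young: "x powr r * y powr (1 - r) \<le> r * x + (1 - r) * y"
      using Youngs_inequality_0[of r "1 - r" x y] assms by simp
    have "y powr (1 - r) * y powr (r - 1) = 1"
      using assms by (simp flip: powr_add)
    then have "x powr r = x powr r * y powr (1 - r) * y powr (r - 1)"
      by (simp add: mult.assoc)
    also have "\<dots> \<le> (r * x + (1 - r) * y) * y powr (r - 1)"
      using young by (rule mult_right_mono) simp
    also have "\<dots> = y powr r + r * y powr (r - 1) * (x - y)"
      using y by (simp add: algebra_simps)
    finally show ?thesis .
  qed
qed

lemma nn_integral_exp_tail:
  fixes c a t :: real
  assumes "0 \<le> c" "0 < a"
  shows "(\<integral>\<^sup>+ s. ennreal (c * exp (- a * s)) * indicator {t..} s \<partial>lborel) = ennreal (c * exp (- a * t) / a)"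
proof -
  have "((\<lambda>s. c * exp (- a * s)) has_integral c * (exp (- a * t) / a)) {t..}"
    using has_integral_exp_minus_to_infinity[OF assms(2)] by (rule has_integral_mult_right)
  from nn_integral_has_integral_lebesgue'[OF _ this] assms show ?thesis by simp
qed

lemma tail_gronwall_bound:
  fixes u :: "real \<Rightarrow> ennreal" and c \<delta> B :: real
  assumes "0 < \<delta>" "0 \<le> c" "0 \<le> B"
    and bounded: "\<And>t. 0 \<le> t \<Longrightarrow> u t \<le> ennreal B"
    and tail: "\<And>t. 0 \<le> t \<Longrightarrow> u t \<le> (\<integral>\<^sup>+ s. ennreal (c * exp (- \<delta> * s)) * u s * indicator {t..} s \<partial>lborel)"
    and "0 \<le> t"
  shows "u t \<le> ennreal (B * (c / \<delta>) ^ n / fact n * exp (- (n * \<delta>) * t))"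
  using \<open>0 \<le> t\<close>
proof (induction n arbitrary: t)
  case 0
  then show ?case using bounded by simp
next
  case (Suc n)
  define a where "a = c * (B * (c / \<delta>) ^ n / fact n)"
  have a: "0 \<le> a" using assms(1-3) by (simp add: a_def)
  have "u t \<le> (\<integral>\<^sup>+ s. ennreal (c * exp (- \<delta> * s)) * u s * indicator {t..} s \<partial>lborel)"
    using tail[OF Suc.prems] .
  also have "\<dots> \<le> (\<integral>\<^sup>+ s. ennreal (a * exp (- (Suc n * \<delta>) * s)) * indicator {t..} s \<partial>lborel)"
  proof (intro nn_integral_mono)
    fix s
    show "ennreal (c * exp (- \<delta> * s)) * u s * indicator {t..} s
        \<le> ennreal (a * exp (- (Suc n * \<delta>) * s)) * indicator {t..} s"
    proof (cases "t \<le> s")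
      case True
      then have "ennreal (c * exp (- \<delta> * s)) * u s
          \<le> ennreal (c * exp (- \<delta> * s)) * ennreal (B * (c / \<delta>) ^ n / fact n * exp (- (n * \<delta>) * s))"
        using Suc.IH Suc.prems by (intro mult_left_mono) simp_all
      also have "\<dots> = ennreal (a * exp (- (Suc n * \<delta>) * s))"
        using assms(1-3)
        by (simp add: a_def algebra_simps ennreal_mult[symmetric] flip: exp_add)
      finally show ?thesis using True by simp
    qed simp
  qed
  also have "\<dots> = ennreal (a * exp (- (Suc n * \<delta>) * t) / (Suc n * \<delta>))"
    using a assms(1) by (intro nn_integral_exp_tail) simp_all
  also have "a * exp (- (Suc n * \<delta>) * t) / (Suc n * \<delta>)
      = B * (c / \<delta>) ^ Suc n / fact (Suc n) * exp (- (Suc n * \<delta>) * t)"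
    using assms(1) by (simp add: a_def field_simps)
  finally show ?case .
qed

lemma tail_gronwall:
  fixes u :: "real \<Rightarrow> ennreal" and c \<delta> B :: real
  assumes "0 < \<delta>" "0 \<le> c" "0 \<le> B"
    and "\<And>t. 0 \<le> t \<Longrightarrow> u t \<le> ennreal B"
    and "\<And>t. 0 \<le> t \<Longrightarrow> u t \<le> (\<integral>\<^sup>+ s. ennreal (c * exp (- \<delta> * s)) * u s * indicator {t..} s \<partial>lborel)"
    and "0 \<le> t"
  shows "u t = 0"
proof -
  have "u t \<le> ennreal (B * ((c / \<delta>) ^ n / fact n))" for n
  proof -
    have "exp (- (n * \<delta>) * t) \<le> 1" using assms(1,6) by simp
    then have "B * (c / \<delta>) ^ n / fact n * exp (- (n * \<delta>) * t) \<le> B * ((c / \<delta>) ^ n / fact n)"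
      using assms(1-3) mult_left_mono[of _ 1 "B * (c / \<delta>) ^ n / fact n"] by simp
    then show ?thesis
      using tail_gronwall_bound[OF assms] order_trans ennreal_leI by blast
  qed
  moreover have "(\<lambda>n. (c / \<delta>) ^ n / fact n) \<longlonglongrightarrow> 0"
    using summable_LIMSEQ_zero[OF summable_exp_generic[of "c / \<delta>"]]
    by (simp add: divide_inverse mult.commute)
  then have "(\<lambda>n. ennreal (B * ((c / \<delta>) ^ n / fact n))) \<longlonglongrightarrow> ennreal 0"
    by (intro tendsto_ennrealI) (use tendsto_mult_right_zero in blast)
  ultimately have "u t \<le> ennreal 0" by (intro LIMSEQ_le_const) blast+
  then show ?thesis by simp
qed

section \<open>The Epstein--Zin aggregator\<close>

lemma EZ_params_exponents:
  assumes "EZ_params R S" "R < 1"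
  shows EZ_params_S_less_1: "S < 1"
    and EZ_params_1_minus_S: "1 - S = (1 - R) / theta R S"
    and EZ_params_rho: "rho R S = 1 - 1 / theta R S"
    and EZ_params_rho_pos: "0 < rho R S"
    and EZ_params_rho_less_1: "rho R S < 1"
proof -
  have th: "1 < theta R S" and S: "S \<noteq> 1" using assms(1) by (auto simp: EZ_params_def)
  then have "0 < (1 - R) / (1 - S)" unfolding theta_def by linarith
  then show "S < 1"
    using assms(2) by (auto simp: zero_less_divide_iff)
  show "1 - S = (1 - R) / theta R S" using S th assms(2) by (simp add: theta_def)
  show rho: "rho R S = 1 - 1 / theta R S" using th by (simp add: rho_def field_simps)
  show "0 < rho R S" "rho R S < 1" unfolding rho using th by simp_all
qed

definition EZ_rate :: "real \<Rightarrow> real \<Rightarrow> real \<Rightarrow> real \<Rightarrow> real \<Rightarrow> real" where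
  "EZ_rate R S K \<gamma> t = (theta R S - 1) * K powr (1 / theta R S) * exp (- (\<gamma> / theta R S) * t)"

lemma EZ_rate_nonneg: "EZ_params R S \<Longrightarrow> 0 \<le> EZ_rate R S K \<gamma> t"
  unfolding EZ_rate_def EZ_params_def by simp

lemma f_EZ_nonneg: "S < 1 \<Longrightarrow> 0 \<le> f_EZ R S c v"
  unfolding f_EZ_def by simp

lemma f_EZ_le_tangent:
  assumes "EZ_params R S" "R < 1" "0 \<le> v1" "0 < v2"
  shows "f_EZ R S c v1 \<le> f_EZ R S c v2
    + c powr (1 - S) / (1 - S) * (rho R S * (1 - R) * ((1 - R) * v2) powr (rho R S - 1)) * (v1 - v2)"
proof -
  define k where "k = c powr (1 - S) / (1 - S)"
  define r where "r = rho R S"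
  define y where "y = (1 - R) * v2"
  have "0 \<le> k" using EZ_params_S_less_1[OF assms(1,2)] by (simp add: k_def)
  have "((1 - R) * v1) powr r \<le> y powr r + r * y powr (r - 1) * ((1 - R) * v1 - y)"
    using assms unfolding r_def y_def
    by (intro powr_le_tangent EZ_params_rho_pos EZ_params_rho_less_1) simp_all
  also have "\<dots> = y powr r + r * (1 - R) * y powr (r - 1) * (v1 - v2)"
    by (simp add: y_def algebra_simps)
  finally have "k * ((1 - R) * v1) powr r \<le> k * y powr r + k * (r * (1 - R) * y powr (r - 1)) * (v1 - v2)"
    using \<open>0 \<le> k\<close> by (auto dest: mult_left_mono simp: algebra_simps)
  then show ?thesis
    by (simp add: f_EZ_def k_def r_def y_def)
qed

lemma f_EZ_slope_le_EZ_rate: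
  assumes "EZ_params R S" "R < 1" "0 < v" "0 \<le> c" "0 < K"
    and "c powr (1 - R) \<le> K * exp (- \<gamma> * t) * ((1 - R) * v)"
  shows "c powr (1 - S) / (1 - S) * (rho R S * (1 - R) * ((1 - R) * v) powr (rho R S - 1))
    \<le> EZ_rate R S K \<gamma> t"
proof -
  define th where "th = theta R S"
  define w where "w = (1 - R) * v"
  have th: "1 < th" using assms(1) by (simp add: th_def EZ_params_def)
  have w: "0 < w" using assms(2,3) by (simp add: w_def)
  have S: "1 - S = (1 - R) / th" and rho: "rho R S = 1 - 1 / th"
    using EZ_params_1_minus_S[OF assms(1,2)] EZ_params_rho[OF assms(1,2)] by (simp_all add: th_def)
  have c: "c powr (1 - S) \<le> K powr (1 / th) * exp (- (\<gamma> / th) * t) * w powr (1 / th)"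
  proof (cases "c = 0")
    case False
    have "c powr (1 - S) = (c powr (1 - R)) powr (1 / th)"
      using S by (simp add: powr_powr)
    also have "\<dots> \<le> (K * exp (- \<gamma> * t) * w) powr (1 / th)"
      using assms(4,6) th by (intro powr_mono2) (auto simp: w_def)
    also have "\<dots> = K powr (1 / th) * exp (- (\<gamma> / th) * t) * w powr (1 / th)"
      using assms(5) w by (simp add: powr_mult exp_powr_real powr_def[of "exp _"])
    finally show ?thesis .
  qed (use w assms(5) in simp)
  have "c powr (1 - S) / (1 - S) * (rho R S * (1 - R) * w powr (rho R S - 1))
      = (th - 1) * (c powr (1 - S) * w powr (- (1 / th)))"
    using th assms(2) by (simp add: S rho field_simps)
  also have "\<dots> \<le> (th - 1) * (K powr (1 / th) * exp (- (\<gamma> / th) * t) * w powr (1 / th) * w powr (- (1 / th)))"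
    using c th by (intro mult_left_mono mult_right_mono) simp_all
  also have "\<dots> = EZ_rate R S K \<gamma> t"
    using w by (simp add: EZ_rate_def th_def mult.assoc flip: powr_add)
  finally show ?thesis by (simp add: w_def)
qed

lemma f_EZ_one_sided_lipschitz:
  assumes "EZ_params R S" "R < 1" "0 \<le> v1" "0 < v2" "0 \<le> c" "0 < K"
    and "c powr (1 - R) \<le> K * exp (- \<gamma> * t) * ((1 - R) * v2)"
  shows "f_EZ R S c v1 \<le> f_EZ R S c v2 + EZ_rate R S K \<gamma> t * max 0 (v1 - v2)"
proof -
  define slope where
    "slope = c powr (1 - S) / (1 - S) * (rho R S * (1 - R) * ((1 - R) * v2) powr (rho R S - 1))"
  have "0 \<le> slope"
    using EZ_params_S_less_1[OF assms(1,2)] EZ_params_rho_pos[OF assms(1,2)] assms(2)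
    by (simp add: slope_def)
  have "f_EZ R S c v1 \<le> f_EZ R S c v2 + slope * (v1 - v2)"
    unfolding slope_def by (rule f_EZ_le_tangent[OF assms(1-4)])
  also have "\<dots> \<le> f_EZ R S c v2 + slope * max 0 (v1 - v2)"
    using \<open>0 \<le> slope\<close> by (intro add_left_mono mult_left_mono) simp_all
  also have "\<dots> \<le> f_EZ R S c v2 + EZ_rate R S K \<gamma> t * max 0 (v1 - v2)"
    unfolding slope_def
    by (intro add_left_mono mult_right_mono f_EZ_slope_le_EZ_rate[OF assms(1,2,4,5,6,7)]) simp
  finally show ?thesis .
qed

section \<open>Comparison of sub- and supersolutions\<close>

locale EZ_comparison =
  fixes M :: "'a measure" and F :: "real \<Rightarrow> 'a measure"
    and R S K \<gamma> :: real and C V1 V2 :: "real \<Rightarrow> 'a \<Rightarrow> real"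
  assumes std_filtered_space: "std_filtered_space M F"
    and EZ_params: "EZ_params R S"
    and R_less_1: "R < 1"
    and C_progressive_nonneg: "progressive_nonneg M F C"
    and sub: "subsolution M F R S C V1"
    and super: "supersolution M F R S C V2"
    and V2_pos: "\<forall>t\<ge>0. \<forall>\<omega>\<in>space M. 0 < V2 t \<omega>"
    and conditionA: "conditionA M F R S C V1 V2"
    and K_pos: "0 < K" and \<gamma>_pos: "0 < \<gamma>"
    and C_growth: "\<forall>t\<ge>0. \<forall>\<omega>\<in>space M. C t \<omega> powr (1 - R) \<le> K * exp (- \<gamma> * t) * ((1 - R) * V2 t \<omega>)"
begin

lemma prob_space: "prob_space M"
  and filtration: "filtration_on M F"
  using std_filtered_space unfolding std_filtered_space_def by simp_all

lemma optional_V1: "optional M F V1" and right_limits_V1: "has_right_limits M V1"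
  and optional_V2: "optional M F V2" and right_limits_V2: "has_right_limits M V2"
  using sub super unfolding subsolution_def supersolution_def is_VV_optional_rl_def by auto

lemma V1_nonneg: "0 \<le> t \<Longrightarrow> \<omega> \<in> space M \<Longrightarrow> 0 \<le> V1 t \<omega>"
  using sub R_less_1
  unfolding subsolution_def is_VV_optional_rl_def VV_def by (fastforce simp: zero_le_mult_iff)

lemma V2_nonneg: "0 \<le> t \<Longrightarrow> \<omega> \<in> space M \<Longrightarrow> 0 \<le> V2 t \<omega>"
  using V2_pos by (simp add: less_imp_le)

lemma C_progressive: "progressive M F C"
  and C_nonneg: "0 \<le> t \<Longrightarrow> \<omega> \<in> space M \<Longrightarrow> 0 \<le> C t \<omega>"
  using C_progressive_nonneg unfolding progressive_nonneg_def by simp_all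

definition excess :: "real \<Rightarrow> 'a \<Rightarrow> real" where
  "excess t \<omega> = max 0 (V1 t \<omega> - V2 t \<omega>)"

definition mean_excess :: "real \<Rightarrow> ennreal" where
  "mean_excess t = (\<integral>\<^sup>+\<omega>. ennreal (excess t \<omega>) \<partial>M)"

definition mean_terminal :: "real \<Rightarrow> ennreal" where
  "mean_terminal T = (\<integral>\<^sup>+\<omega>. ennreal (rlim V1 T \<omega>) \<partial>M)"

definition aggregate_integral :: "(real \<Rightarrow> 'a \<Rightarrow> real) \<Rightarrow> ('a \<Rightarrow> real) \<Rightarrow> real \<Rightarrow> 'a \<Rightarrow> ennreal" where
  "aggregate_integral V \<sigma> T \<omega> =
     (\<integral>\<^sup>+ s. ennreal (f_EZ R S (C s \<omega>) (V s \<omega>)) * indicator {\<sigma> \<omega>..T} s \<partial>lborel_upto T)"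

definition excess_integral :: "('a \<Rightarrow> real) \<Rightarrow> real \<Rightarrow> 'a \<Rightarrow> ennreal" where
  "excess_integral \<sigma> T \<omega> =
     (\<integral>\<^sup>+ s. ennreal (EZ_rate R S K \<gamma> s * excess s \<omega>) * indicator {\<sigma> \<omega>..T} s \<partial>lborel_upto T)"

definition tail_excess :: "real \<Rightarrow> ennreal" where
  "tail_excess t = (\<integral>\<^sup>+ s. ennreal (EZ_rate R S K \<gamma> s) * mean_excess s * indicator {t..} s \<partial>lborel)"

lemma measurable_f_EZ_pair:
  assumes "optional M F V" "0 \<le> T"
  shows "(\<lambda>x. ennreal (f_EZ R S (C (snd x) (fst x)) (V (snd x) (fst x))))
    \<in> borel_measurable (M \<Otimes>\<^sub>M lborel_upto T)"
proof -
  note [measurable] = optional_measurable_pair[OF filtration assms(1)]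
    progressive_measurable_pair[OF filtration C_progressive assms(2)]
  show ?thesis unfolding f_EZ_def by measurable
qed

lemma measurable_excess_pair:
  "(\<lambda>x. ennreal (EZ_rate R S K \<gamma> (snd x) * excess (snd x) (fst x))) \<in> borel_measurable (M \<Otimes>\<^sub>M lborel_upto T)"
proof -
  note [measurable] = optional_measurable_pair[OF filtration optional_V1]
    optional_measurable_pair[OF filtration optional_V2]
  show ?thesis unfolding EZ_rate_def excess_def by measurable
qed

lemma measurable_excess: "0 \<le> t \<Longrightarrow> (\<lambda>\<omega>. ennreal (excess t \<omega>)) \<in> borel_measurable M"
  using optional_at_measurable[OF filtration optional_V1, of "\<lambda>_. t"]
    optional_at_measurable[OF filtration optional_V2, of "\<lambda>_. t"]
  unfolding excess_def by measurable

lemma borel_measurable_aggregate_integral: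
  "optional M F V \<Longrightarrow> 0 \<le> T \<Longrightarrow> \<sigma> \<in> borel_measurable M \<Longrightarrow> aggregate_integral V \<sigma> T \<in> borel_measurable M"
  unfolding aggregate_integral_def
  by (rule borel_measurable_nn_integral_lborel_upto) (use measurable_f_EZ_pair in auto)

lemma borel_measurable_excess_integral:
  "\<sigma> \<in> borel_measurable M \<Longrightarrow> excess_integral \<sigma> T \<in> borel_measurable M"
  unfolding excess_integral_def
  by (rule borel_measurable_nn_integral_lborel_upto) (use measurable_excess_pair in auto)

definition nn_target :: "(real \<Rightarrow> 'a \<Rightarrow> real) \<Rightarrow> ('a \<Rightarrow> real) \<Rightarrow> real \<Rightarrow> 'a \<Rightarrow> ennreal" where
  "nn_target V \<sigma> T \<omega> = ennreal (rlim V T \<omega>) + aggregate_integral V \<sigma> T \<omega>"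

lemma EZ_target_eq_nn_target:
  assumes "\<And>t. 0 \<le> t \<Longrightarrow> 0 \<le> V t \<omega>" "\<omega> \<in> space M" "0 \<le> \<sigma> \<omega>" "0 \<le> rlim V T \<omega>"
  shows "EZ_target R S C V \<sigma> (\<lambda>_. T) \<omega> = enn2ereal (nn_target V \<sigma> T \<omega>)"
  using assms f_EZ_nonneg[OF EZ_params_S_less_1[OF EZ_params R_less_1]]
  by (simp add: EZ_target_def nn_target_def aggregate_integral_def path_int_nonneg plus_ennreal.rep_eq)

lemma gen_cond_exp_EZ_target:
  assumes V: "optional M F V" "has_right_limits M V" "\<And>t \<omega>. 0 \<le> t \<Longrightarrow> \<omega> \<in> space M \<Longrightarrow> 0 \<le> V t \<omega>"
    and \<sigma>: "stopping_time_on M F \<sigma>" and T: "0 \<le> T"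
  shows "AE \<omega> in M. gen_cond_exp M (sigma_at M F \<sigma>) (EZ_target R S C V \<sigma> (\<lambda>_. T)) \<omega>
    = enn2ereal (nn_cond_exp M (sigma_at M F \<sigma>) (nn_target V \<sigma> T) \<omega>)"
proof -
  interpret N: finite_measure_subalgebra M "sigma_at M F \<sigma>"
    by (rule finite_measure_subalgebra_sigma_at[OF prob_space filtration \<sigma>])
  have \<sigma>_measurable [measurable]: "\<sigma> \<in> borel_measurable M"
    by (rule stopping_time_on_measurable[OF filtration \<sigma>])
  note [measurable] = borel_measurable_rlim[OF filtration V(1,2) T]
    borel_measurable_aggregate_integral[OF V(1) T \<sigma>_measurable]
  show ?thesis
  proof (rule gen_cond_exp_enn2ereal[OF N.sigma_finite_subalgebra_axioms])
    show "nn_target V \<sigma> T \<in> borel_measurable M"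
      unfolding nn_target_def by measurable
    fix \<omega> assume "\<omega> \<in> space M"
    then show "EZ_target R S C V \<sigma> (\<lambda>_. T) \<omega> = enn2ereal (nn_target V \<sigma> T \<omega>)"
      using V(3) \<sigma> rlim_nonneg[OF V(2) T] unfolding stopping_time_on_def
      by (intro EZ_target_eq_nn_target) auto
  qed
qed

lemma aggregate_integral_le:
  assumes "0 \<le> T" "\<omega> \<in> space M"
  shows "aggregate_integral V1 \<sigma> T \<omega> \<le> aggregate_integral V2 \<sigma> T \<omega> + excess_integral \<sigma> T \<omega>"
proof -
  have "aggregate_integral V1 \<sigma> T \<omega>
      \<le> (\<integral>\<^sup>+ s. ennreal (f_EZ R S (C s \<omega>) (V2 s \<omega>)) * indicator {\<sigma> \<omega>..T} s
             + ennreal (EZ_rate R S K \<gamma> s * excess s \<omega>) * indicator {\<sigma> \<omega>..T} s \<partial>lborel_upto T)"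
    unfolding aggregate_integral_def
  proof (intro nn_integral_mono)
    fix s assume "s \<in> space (lborel_upto T)"
    then have s: "0 \<le> s" by simp
    have "f_EZ R S (C s \<omega>) (V1 s \<omega>) \<le> f_EZ R S (C s \<omega>) (V2 s \<omega>) + EZ_rate R S K \<gamma> s * excess s \<omega>"
      unfolding excess_def using C_growth s assms(2)
      by (intro f_EZ_one_sided_lipschitz EZ_params R_less_1 V1_nonneg V2_pos[rule_format] C_nonneg K_pos)
        simp_all
    then have "ennreal (f_EZ R S (C s \<omega>) (V1 s \<omega>))
        \<le> ennreal (f_EZ R S (C s \<omega>) (V2 s \<omega>)) + ennreal (EZ_rate R S K \<gamma> s * excess s \<omega>)"
      using EZ_rate_nonneg[OF EZ_params] f_EZ_nonneg[OF EZ_params_S_less_1[OF EZ_params R_less_1]]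
      by (simp add: excess_def flip: ennreal_plus)
    then show "ennreal (f_EZ R S (C s \<omega>) (V1 s \<omega>)) * indicator {\<sigma> \<omega>..T} s
        \<le> ennreal (f_EZ R S (C s \<omega>) (V2 s \<omega>)) * indicator {\<sigma> \<omega>..T} s
          + ennreal (EZ_rate R S K \<gamma> s * excess s \<omega>) * indicator {\<sigma> \<omega>..T} s"
      by (auto split: split_indicator)
  qed
  also have "\<dots> = aggregate_integral V2 \<sigma> T \<omega> + excess_integral \<sigma> T \<omega>"
    unfolding aggregate_integral_def excess_integral_def
    using measurable_Pair2[OF measurable_f_EZ_pair[OF optional_V2 assms(1)] assms(2)]
      measurable_Pair2[OF measurable_excess_pair assms(2)]
    by (intro nn_integral_add) simp_all
  finally show ?thesis .
qed

lemma nn_target_le: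
  assumes "0 \<le> T" "\<omega> \<in> space M"
  shows "nn_target V1 \<sigma> T \<omega> \<le> nn_target V2 \<sigma> T \<omega> + (ennreal (rlim V1 T \<omega>) + excess_integral \<sigma> T \<omega>)"
proof -
  have "0 \<le> rlim V2 T \<omega>"
    using rlim_nonneg[OF right_limits_V2 assms] V2_nonneg assms(2) by blast
  then have "ennreal (rlim V1 T \<omega>) \<le> ennreal (rlim V2 T \<omega>) + ennreal (rlim V1 T \<omega>)"
    by (cases "0 \<le> rlim V1 T \<omega>") (simp_all flip: ennreal_plus)
  with aggregate_integral_le[OF assms] show ?thesis
    unfolding nn_target_def by (metis (no_types, lifting) add_mono add.assoc add.left_commute)
qed

lemma excess_le_cond_exp:
  assumes \<sigma>: "stopping_time_on M F \<sigma>" and T: "0 \<le> T" and \<sigma>_le: "\<forall>\<omega>\<in>space M. \<sigma> \<omega> \<le> T"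
  shows "AE \<omega> in M. ennreal (excess (\<sigma> \<omega>) \<omega>)
    \<le> nn_cond_exp M (sigma_at M F \<sigma>) (\<lambda>\<omega>. ennreal (rlim V1 T \<omega>) + excess_integral \<sigma> T \<omega>) \<omega>"
proof -
  let ?E = "nn_cond_exp M (sigma_at M F \<sigma>)"
  define Q where "Q \<omega> = ennreal (rlim V1 T \<omega>) + excess_integral \<sigma> T \<omega>" for \<omega>
  interpret N: finite_measure_subalgebra M "sigma_at M F \<sigma>"
    by (rule finite_measure_subalgebra_sigma_at[OF prob_space filtration \<sigma>])
  have \<sigma>_measurable [measurable]: "\<sigma> \<in> borel_measurable M"
    by (rule stopping_time_on_measurable[OF filtration \<sigma>])
  note [measurable] = borel_measurable_rlim[OF filtration optional_V1 right_limits_V1 T]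
    borel_measurable_rlim[OF filtration optional_V2 right_limits_V2 T]
    borel_measurable_aggregate_integral[OF optional_V1 T \<sigma>_measurable]
    borel_measurable_aggregate_integral[OF optional_V2 T \<sigma>_measurable]
    borel_measurable_excess_integral[OF \<sigma>_measurable]
  have [measurable]: "nn_target V1 \<sigma> T \<in> borel_measurable M" "nn_target V2 \<sigma> T \<in> borel_measurable M"
    "Q \<in> borel_measurable M"
    unfolding nn_target_def Q_def by measurable
  have bounded: "bounded_stopping_time M F \<sigma>" "bounded_stopping_time M F (\<lambda>_. T)"
    using \<sigma> \<sigma>_le bounded_stopping_time_const[OF filtration T] unfolding bounded_stopping_time_def by blast+
  have "AE \<omega> in M. ereal (V1 (\<sigma> \<omega>) \<omega>) \<le> gen_cond_exp M (sigma_at M F \<sigma>) (EZ_target R S C V1 \<sigma> (\<lambda>_. T)) \<omega>"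
    using sub bounded \<sigma>_le unfolding subsolution_def by simp
  moreover have "AE \<omega> in M. gen_cond_exp M (sigma_at M F \<sigma>) (EZ_target R S C V2 \<sigma> (\<lambda>_. T)) \<omega> \<le> ereal (V2 (\<sigma> \<omega>) \<omega>)"
    using super bounded \<sigma>_le unfolding supersolution_def by simp
  moreover have "AE \<omega> in M. gen_cond_exp M (sigma_at M F \<sigma>) (EZ_target R S C V1 \<sigma> (\<lambda>_. T)) \<omega>
      = enn2ereal (?E (nn_target V1 \<sigma> T) \<omega>)"
    by (rule gen_cond_exp_EZ_target[OF optional_V1 right_limits_V1 _ \<sigma> T]) (simp add: V1_nonneg)
  moreover have "AE \<omega> in M. gen_cond_exp M (sigma_at M F \<sigma>) (EZ_target R S C V2 \<sigma> (\<lambda>_. T)) \<omega>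
      = enn2ereal (?E (nn_target V2 \<sigma> T) \<omega>)"
    by (rule gen_cond_exp_EZ_target[OF optional_V2 right_limits_V2 _ \<sigma> T]) (simp add: V2_nonneg)
  moreover have "AE \<omega> in M. ?E (nn_target V1 \<sigma> T) \<omega> \<le> ?E (\<lambda>\<omega>. nn_target V2 \<sigma> T \<omega> + Q \<omega>) \<omega>"
    using nn_target_le[OF T] by (intro N.nn_cond_exp_mono AE_I2) (simp_all add: Q_def)
  moreover have "AE \<omega> in M. ?E (nn_target V2 \<sigma> T) \<omega> + ?E Q \<omega> = ?E (\<lambda>\<omega>. nn_target V2 \<sigma> T \<omega> + Q \<omega>) \<omega>"
    by (rule N.nn_cond_exp_sum) simp_all
  ultimately show ?thesis
    unfolding Q_def[symmetric]
  proof eventually_elim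
    case (elim \<omega>)
    have "ereal (V1 (\<sigma> \<omega>) \<omega>) \<le> enn2ereal (?E (nn_target V1 \<sigma> T) \<omega>)" using elim(1,3) by simp
    moreover have "enn2ereal (?E (nn_target V2 \<sigma> T) \<omega>) \<le> ereal (V2 (\<sigma> \<omega>) \<omega>)" using elim(2,4) by simp
    moreover have "?E (nn_target V1 \<sigma> T) \<omega> \<le> ?E (nn_target V2 \<sigma> T) \<omega> + ?E Q \<omega>" using elim(5,6) by simp
    ultimately show ?case unfolding excess_def by (rule ennreal_max_0_diff_le)
  qed
qed

lemma mean_excess_stopped_le:
  assumes "stopping_time_on M F \<sigma>" "0 \<le> T" "\<forall>\<omega>\<in>space M. \<sigma> \<omega> \<le> T"
  shows "(\<integral>\<^sup>+\<omega>. ennreal (excess (\<sigma> \<omega>) \<omega>) \<partial>M) \<le> mean_terminal T + (\<integral>\<^sup>+\<omega>. excess_integral \<sigma> T \<omega> \<partial>M)"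
proof -
  interpret N: finite_measure_subalgebra M "sigma_at M F \<sigma>"
    by (rule finite_measure_subalgebra_sigma_at[OF prob_space filtration assms(1)])
  note [measurable] = stopping_time_on_measurable[OF filtration assms(1)]
    borel_measurable_rlim[OF filtration optional_V1 right_limits_V1 assms(2)]
    borel_measurable_excess_integral[OF stopping_time_on_measurable[OF filtration assms(1)]]
  have "(\<integral>\<^sup>+\<omega>. ennreal (excess (\<sigma> \<omega>) \<omega>) \<partial>M)
      \<le> (\<integral>\<^sup>+\<omega>. nn_cond_exp M (sigma_at M F \<sigma>) (\<lambda>\<omega>. ennreal (rlim V1 T \<omega>) + excess_integral \<sigma> T \<omega>) \<omega> \<partial>M)"
    by (rule nn_integral_mono_AE[OF excess_le_cond_exp[OF assms]])
  also have "\<dots> = (\<integral>\<^sup>+\<omega>. ennreal (rlim V1 T \<omega>) + excess_integral \<sigma> T \<omega> \<partial>M)"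
    using N.nn_cond_exp_intg[of "\<lambda>_. 1"] by simp
  also have "\<dots> = mean_terminal T + (\<integral>\<^sup>+\<omega>. excess_integral \<sigma> T \<omega> \<partial>M)"
    unfolding mean_terminal_def by (rule nn_integral_add) simp_all
  finally show ?thesis .
qed

lemma excess_integral_le_tail_excess:
  assumes "\<forall>\<omega>\<in>space M. t \<le> \<sigma> \<omega>"
  shows "(\<integral>\<^sup>+\<omega>. excess_integral \<sigma> T \<omega> \<partial>M) \<le> tail_excess t"
proof -
  interpret T: sigma_finite_measure "lborel_upto T" by (rule sigma_finite_lborel_upto)
  interpret pair_sigma_finite M "lborel_upto T"
    using prob_space T.sigma_finite_measure_axioms
    by (simp add: pair_sigma_finite_def prob_space_imp_sigma_finite)
  have "(\<integral>\<^sup>+\<omega>. excess_integral \<sigma> T \<omega> \<partial>M)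
      \<le> (\<integral>\<^sup>+\<omega>. (\<integral>\<^sup>+ s. ennreal (EZ_rate R S K \<gamma> s * excess s \<omega>) * indicator {t..T} s \<partial>lborel_upto T) \<partial>M)"
    unfolding excess_integral_def
    using assms by (intro nn_integral_mono) (auto split: split_indicator)
  also have "\<dots> = (\<integral>\<^sup>+ s. (\<integral>\<^sup>+\<omega>. ennreal (EZ_rate R S K \<gamma> s * excess s \<omega>) * indicator {t..T} s \<partial>M) \<partial>lborel_upto T)"
    using measurable_excess_pair by (intro Fubini' [symmetric]) (simp add: case_prod_beta')
  also have "\<dots> = (\<integral>\<^sup>+ s. ennreal (EZ_rate R S K \<gamma> s) * mean_excess s * indicator {t..T} s \<partial>lborel_upto T)"
  proof (intro nn_integral_cong)
    fix s assume "s \<in> space (lborel_upto T)"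
    then have "(\<integral>\<^sup>+\<omega>. (ennreal (EZ_rate R S K \<gamma> s) * indicator {t..T} s) * ennreal (excess s \<omega>) \<partial>M)
        = ennreal (EZ_rate R S K \<gamma> s) * indicator {t..T} s * mean_excess s"
      unfolding mean_excess_def by (intro nn_integral_cmult measurable_excess) simp
    then show "(\<integral>\<^sup>+\<omega>. ennreal (EZ_rate R S K \<gamma> s * excess s \<omega>) * indicator {t..T} s \<partial>M)
        = ennreal (EZ_rate R S K \<gamma> s) * mean_excess s * indicator {t..T} s"
      using EZ_rate_nonneg[OF EZ_params] by (simp add: excess_def ennreal_mult ac_simps)
  qed
  also have "\<dots> = (\<integral>\<^sup>+ s. ennreal (EZ_rate R S K \<gamma> s) * mean_excess s * indicator {t..T} s * indicator {0..T} s \<partial>lborel)"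
    unfolding lborel_upto_def by (rule nn_integral_restrict_space) simp
  also have "\<dots> \<le> tail_excess t"
    unfolding tail_excess_def by (intro nn_integral_mono) (auto split: split_indicator)
  finally show ?thesis .
qed

lemma mean_terminal_small:
  assumes "0 < e"
  shows "\<forall>\<^sub>F T in at_top. mean_terminal T < ennreal e"
proof -
  have "Limsup at_top (\<lambda>t. gen_exp M (\<lambda>\<omega>. ereal (rlim V1 t \<omega>))) < ereal e"
    using sub assms unfolding subsolution_def by (meson ereal_less(2) le_less_trans)
  then have "\<forall>\<^sub>F t in at_top. gen_exp M (\<lambda>\<omega>. ereal (rlim V1 t \<omega>)) < ereal e"
    by (rule Limsup_lessD)
  with eventually_ge_at_top[of 0] show ?thesis
  proof eventually_elim
    case (elim t)
    then have "gen_exp M (\<lambda>\<omega>. ereal (rlim V1 t \<omega>)) = enn2ereal (mean_terminal t)"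
      unfolding mean_terminal_def
      using rlim_nonneg[OF right_limits_V1] V1_nonneg by (intro gen_exp_nonneg) blast
    with elim show ?case
      by (metis enn2ereal_ennreal less_ennreal.rep_eq less_imp_le assms)
  qed
qed

lemma mean_excess_stopped_le_tail_excess:
  assumes "stopping_time_on M F \<sigma>" "\<forall>\<omega>\<in>space M. t \<le> \<sigma> \<omega> \<and> \<sigma> \<omega> \<le> N"
  shows "(\<integral>\<^sup>+\<omega>. ennreal (excess (\<sigma> \<omega>) \<omega>) \<partial>M) \<le> tail_excess t"
proof (rule ennreal_le_epsilon)
  fix e :: real assume "0 < e"
  then obtain T0 where T0: "\<And>T. T0 \<le> T \<Longrightarrow> mean_terminal T < ennreal e"
    using mean_terminal_small unfolding eventually_at_top_linorder by blast
  define T where "T = max T0 (max N 0)"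
  have "(\<integral>\<^sup>+\<omega>. ennreal (excess (\<sigma> \<omega>) \<omega>) \<partial>M) \<le> mean_terminal T + (\<integral>\<^sup>+\<omega>. excess_integral \<sigma> T \<omega> \<partial>M)"
    using assms by (intro mean_excess_stopped_le) (auto simp: T_def)
  also have "\<dots> \<le> ennreal e + tail_excess t"
    using assms T0[of T] by (intro add_mono excess_integral_le_tail_excess) (auto simp: T_def)
  finally show "(\<integral>\<^sup>+\<omega>. ennreal (excess (\<sigma> \<omega>) \<omega>) \<partial>M) \<le> tail_excess t + ennreal e"
    by (simp add: add.commute)
qed

lemma mean_excess_le_tail_excess:
  assumes "0 \<le> t"
  shows "mean_excess t \<le> tail_excess t"
  using mean_excess_stopped_le_tail_excess[of "\<lambda>_. t" t t] assms bounded_stopping_time_const[OF filtration]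
  unfolding mean_excess_def bounded_stopping_time_def by simp

lemma mean_excess_eq_0:
  assumes "0 \<le> t"
  shows "mean_excess t = 0"
proof -
  obtain B where B: "\<forall>t\<ge>0. mean_excess t \<le> ennreal B"
    using conditionA unfolding conditionA_def mean_excess_def excess_def by blast
  define c where "c = (theta R S - 1) * K powr (1 / theta R S)"
  define \<delta> where "\<delta> = \<gamma> / theta R S"
  have "1 < theta R S" using EZ_params unfolding EZ_params_def by simp
  then have "0 < \<delta>" "0 \<le> c" using \<gamma>_pos by (simp_all add: c_def \<delta>_def)
  then show ?thesis
  proof (rule tail_gronwall[of \<delta> c "max B 0" mean_excess, OF _ _ _ _ _ assms])
    fix t :: real assume "0 \<le> t"
    then show "mean_excess t \<le> ennreal (max B 0)"
      using B order_trans ennreal_leI[of B "max B 0"] by auto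
    show "mean_excess t \<le> (\<integral>\<^sup>+ s. ennreal (c * exp (- \<delta> * s)) * mean_excess s * indicator {t..} s \<partial>lborel)"
      using mean_excess_le_tail_excess[OF \<open>0 \<le> t\<close>]
      by (simp add: tail_excess_def EZ_rate_def c_def \<delta>_def)
  qed simp
qed

lemma V1_le_V2_at_bounded_stopping_time:
  assumes "stopping_time_on M F \<sigma>" "\<forall>\<omega>\<in>space M. \<sigma> \<omega> \<le> N"
  shows "AE \<omega> in M. V1 (\<sigma> \<omega>) \<omega> \<le> V2 (\<sigma> \<omega>) \<omega>"
proof -
  have \<sigma>_nonneg: "\<And>\<omega>. \<omega> \<in> space M \<Longrightarrow> 0 \<le> \<sigma> \<omega>" using assms(1) unfolding stopping_time_on_def by simp
  note [measurable] = stopping_time_on_measurable[OF filtration assms(1)]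
    optional_at_measurable[OF filtration optional_V1 _ \<sigma>_nonneg]
    optional_at_measurable[OF filtration optional_V2 _ \<sigma>_nonneg]
  have "(\<lambda>s. ennreal (EZ_rate R S K \<gamma> s) * mean_excess s * indicator {0..} s) = (\<lambda>_. 0)"
    by (auto simp: mean_excess_eq_0 split: split_indicator)
  then have "tail_excess 0 = 0"
    unfolding tail_excess_def by simp
  then have "(\<integral>\<^sup>+\<omega>. ennreal (excess (\<sigma> \<omega>) \<omega>) \<partial>M) = 0"
    using mean_excess_stopped_le_tail_excess[OF assms(1), of 0 N] assms(2) \<sigma>_nonneg by simp
  then have "AE \<omega> in M. ennreal (excess (\<sigma> \<omega>) \<omega>) = 0"
    by (subst (asm) nn_integral_0_iff_AE) (simp_all add: excess_def)
  then show ?thesis by eventually_elim (simp add: excess_def ennreal_eq_0_iff)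
qed

lemma V1_le_V2_at_stopping_time:
  assumes "stopping_time_on M F \<sigma>"
  shows "AE \<omega> in M. V1 (\<sigma> \<omega>) \<omega> \<le> V2 (\<sigma> \<omega>) \<omega>"
proof -
  have "AE \<omega> in M. V1 (min (\<sigma> \<omega>) (real n)) \<omega> \<le> V2 (min (\<sigma> \<omega>) (real n)) \<omega>" for n :: nat
    by (rule V1_le_V2_at_bounded_stopping_time[OF stopping_time_on_min_const[OF filtration assms],
          of _ "real n"]) simp_all
  then have "AE \<omega> in M. \<forall>n::nat. V1 (min (\<sigma> \<omega>) (real n)) \<omega> \<le> V2 (min (\<sigma> \<omega>) (real n)) \<omega>"
    by (simp add: AE_all_countable)
  then show ?thesis
  proof eventually_elim
    case (elim \<omega>)
    then show ?case
      using elim[rule_format, of "nat \<lceil>\<sigma> \<omega>\<rceil>"] real_nat_ceiling_ge[of "\<sigma> \<omega>"] by (simp add: min_absorb1)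
  qed
qed

end

theorem corollary5p6:
  fixes M :: "'a measure" and F :: "real \<Rightarrow> 'a measure"
    and R S K \<gamma> :: real and C V1 V2 :: "real \<Rightarrow> 'a \<Rightarrow> real"
  assumes "std_filtered_space M F"
    and "EZ_params R S"
    and "R < 1"
    and "progressive_nonneg M F C"
    and "subsolution M F R S C V1"
    and "supersolution M F R S C V2"
    and "\<forall>t\<ge>0. \<forall>\<omega>\<in>space M. 0 < V2 t \<omega>"
    and "conditionA M F R S C V1 V2"
    and "0 < K" and "0 < \<gamma>"
    and "\<forall>t\<ge>0. \<forall>\<omega>\<in>space M. C t \<omega> powr (1 - R) \<le> K * exp (- \<gamma> * t) * ((1 - R) * V2 t \<omega>)"
  shows "\<forall>\<sigma>. stopping_time_on M F \<sigma> \<longrightarrow> (AE \<omega> in M. V1 (\<sigma> \<omega>) \<omega> \<le> V2 (\<sigma> \<omega>) \<omega>)"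
proof -
  interpret EZ_comparison M F R S K \<gamma> C V1 V2
    using assms by unfold_locales
  show ?thesis using V1_le_V2_at_stopping_time by blast
qed

end
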